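(* The graph $C_3+P_3$ is of class $\mathcal C_2$.
   Context: All graphs are finite, simple and undirected. $C_n$ and $P_n$ denote the cycle and the path on $n$ vertices. The join $G+H$ is obtained from vertex-disjoint copies of $G$ and $H$ by adding all edges between $V(G)$ and $V(H)$. A drawing is 1-planar if each edge is crossed at most once (adjacent edges never cross, no edge crosses itself); a graph is 1-planar if it has such a drawing. For a 1-planar drawing $D$, $D^\times$ is the plane graph obtained by turning each crossing into a new degree-4 vertex (a false vertex); $N_{D^\times}(c)$ is the neighbour set of a false vertex $c$. A 1-planar graph is of class $\mathcal C_0$ if it has a 1-planar drawing with $|N_{D^\times}(c_1)\cap N_{D^\times}(c_2)|=0$ for all distinct false vertices; for $i\in\{1,2\}$ it is of class $\mathcal C_i$ if it is not of class $\mathcal C_k$ for any $k<i$ and it has a 1-planar drawing with $|N_{D^\times}(c_1)\cap N_{D^\times}(c_2)|\le i$ for all distinct false vertices $c_1,c_2$. *)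

theory Defs
  imports "HOL-Analysis.Analysis"
begin

definition cycle_verts :: "nat \<Rightarrow> nat set" where
  "cycle_verts n = {0..<n}"

definition cycle_edges :: "nat \<Rightarrow> nat set set" where
  "cycle_edges n = {{i, (i + 1) mod n} | i. i < n}"

definition path_verts :: "nat \<Rightarrow> nat set" where
  "path_verts n = {0..<n}"

definition path_edges :: "nat \<Rightarrow> nat set set" where
  "path_edges n = {{i, i + 1} | i. i + 1 < n}"

definition join_verts :: "'a set \<Rightarrow> 'b set \<Rightarrow> ('a + 'b) set" where
  "join_verts V1 V2 = Inl ` V1 \<union> Inr ` V2"

definition join_edges ::
  "'a set \<Rightarrow> 'a set set \<Rightarrow> 'b set \<Rightarrow> 'b set set \<Rightarrow> ('a + 'b) set set" where
  "join_edges V1 E1 V2 E2 =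
     (\<lambda>e. Inl ` e) ` E1 \<union> (\<lambda>e. Inr ` e) ` E2 \<union> {{Inl a, Inr b} | a b. a \<in> V1 \<and> b \<in> V2}"

definition is_drawing ::
  "'a set \<Rightarrow> 'a set set \<Rightarrow> ('a \<Rightarrow> complex) \<Rightarrow> ('a set \<Rightarrow> real \<Rightarrow> complex) \<Rightarrow> bool" where
  "is_drawing V E pos crv \<longleftrightarrow>
     inj_on pos V \<and>
     (\<forall>e\<in>E. arc (crv e) \<and>
        {pathstart (crv e), pathfinish (crv e)} = pos ` e \<and>
        path_image (crv e) \<inter> pos ` V = pos ` e)"

definition edge_interior :: "('a \<Rightarrow> complex) \<Rightarrow> ('a set \<Rightarrow> real \<Rightarrow> complex) \<Rightarrow> 'a set \<Rightarrow> complex set" where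
  "edge_interior pos crv e = path_image (crv e) - pos ` e"

definition crosses_at ::
  "'a set set \<Rightarrow> ('a \<Rightarrow> complex) \<Rightarrow> ('a set \<Rightarrow> real \<Rightarrow> complex) \<Rightarrow> 'a set \<Rightarrow> 'a set \<Rightarrow> complex \<Rightarrow> bool" where
  "crosses_at E pos crv e f p \<longleftrightarrow>
     e \<in> E \<and> f \<in> E \<and> e \<noteq> f \<and> p \<in> edge_interior pos crv e \<and> p \<in> edge_interior pos crv f"

definition one_planar_drawing ::
  "'a set \<Rightarrow> 'a set set \<Rightarrow> ('a \<Rightarrow> complex) \<Rightarrow> ('a set \<Rightarrow> real \<Rightarrow> complex) \<Rightarrow> bool" where
  "one_planar_drawing V E pos crv \<longleftrightarrow>
     is_drawing V E pos crv \<and>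
     (\<forall>e f p. crosses_at E pos crv e f p \<longrightarrow> e \<inter> f = {}) \<and>
     (\<forall>e f g p q. crosses_at E pos crv e f p \<and> crosses_at E pos crv e g q \<longrightarrow> f = g \<and> p = q)"

text \<open>In a 1-planar drawing, the false vertex at the crossing of edges e and f has as
  neighbours in the planarization exactly the four end vertices of e and f, i.e. e \<union> f.
  A drawing has "parameter at most i" if any two distinct false vertices share at most
  i neighbours.\<close>
definition has_1planar_drawing_le ::
  "'a set \<Rightarrow> 'a set set \<Rightarrow> nat \<Rightarrow> bool" where
  "has_1planar_drawing_le V E i \<longleftrightarrow>
     (\<exists>pos crv. one_planar_drawing V E pos crv \<and>
        (\<forall>e1 f1 p e2 f2 q. crosses_at E pos crv e1 f1 p \<and> crosses_at E pos crv e2 f2 q \<and> p \<noteq> q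
            \<longrightarrow> card ((e1 \<union> f1) \<inter> (e2 \<union> f2)) \<le> i))"

definition class_C0 :: "'a set \<Rightarrow> 'a set set \<Rightarrow> bool" where
  "class_C0 V E \<longleftrightarrow> has_1planar_drawing_le V E 0"

definition class_C1 :: "'a set \<Rightarrow> 'a set set \<Rightarrow> bool" where
  "class_C1 V E \<longleftrightarrow> \<not> class_C0 V E \<and> has_1planar_drawing_le V E 1"

definition class_C2 :: "'a set \<Rightarrow> 'a set set \<Rightarrow> bool" where
  "class_C2 V E \<longleftrightarrow> \<not> class_C0 V E \<and> \<not> class_C1 V E \<and> has_1planar_drawing_le V E 2"

end

theory Submission
  imports Defs
begin

text \<open>
  Upper bound: an explicit straight-line drawing of \<open>C\<^sub>3 + P\<^sub>3\<close> has exactly two crossings, and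
  their sets of four end vertices share just two vertices.

  Lower bound: a crossing of two (necessarily disjoint) edges involves four of the six vertices,
  so two crossings at distinct points share at least two end vertices. Hence in a 1-planar drawing
  with parameter at most one all crossings lie at a single point, and every crossing involves one
  fixed edge \<open>r\<close>. But \<open>C\<^sub>3 + P\<^sub>3\<close> minus any edge still contains \<open>K\<^sub>3\<^sub>,\<^sub>3\<close>, whose drawing must have
  a crossing by the Jordan curve theorem, and that crossing avoids \<open>r\<close>.
\<close>

section \<open>Theta graphs and \<open>K\<^sub>3\<^sub>,\<^sub>3\<close> in the plane\<close>

lemma connected_subset_inside:
  fixes S :: "'a::real_normed_vector set"
  assumes "closed S" "connected C" "C \<inter> S = {}" "y \<in> C" "y \<in> inside S"
  shows "C \<subseteq> inside S"
proof (rule ccontr)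
  assume "\<not> C \<subseteq> inside S"
  then have "C \<inter> frontier (inside S) \<noteq> {}"
    using connected_Int_frontier[OF assms(2)] assms(4,5) by blast
  then show False using frontier_inside_subset[OF assms(1)] assms(3) by blast
qed

lemma connected_subset_outside:
  fixes S :: "'a::real_normed_vector set"
  assumes "closed S" "connected C" "C \<inter> S = {}" "y \<in> C" "y \<in> outside S"
  shows "C \<subseteq> outside S"
proof (rule ccontr)
  assume "\<not> C \<subseteq> outside S"
  then have "C \<inter> frontier (outside S) \<noteq> {}"
    using connected_Int_frontier[OF assms(2)] assms(4,5) by blast
  then show False using frontier_outside_subset[OF assms(1)] assms(3) by blast
qed

lemma inside_eq_if_Int_nonempty:
  fixes X Y :: "'a::real_normed_vector set"
  assumes "closed X" "closed Y" "connected (inside X)" "connected (inside Y)"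
    and "X \<inter> inside Y = {}" "Y \<inter> inside X = {}" "inside X \<inter> inside Y \<noteq> {}"
  shows "inside X = inside Y"
proof -
  obtain z where z: "z \<in> inside X" "z \<in> inside Y" using assms(7) by blast
  have "inside X \<subseteq> inside Y"
    using connected_subset_inside[OF assms(2,3) _ z] assms(6) by blast
  moreover have "inside Y \<subseteq> inside X"
    using connected_subset_inside[OF assms(1,4) _ z(2,1)] assms(5) by blast
  ultimately show ?thesis by blast
qed

text \<open>If \<open>S\<^sub>1 \<inter> S\<^sub>2 \<subseteq> S\<^sub>3\<close>, then by Janiszewski's theorem a point that can escape to infinity
  both around \<open>S\<^sub>1 \<union> S\<^sub>3\<close> and around \<open>S\<^sub>2 \<union> S\<^sub>3\<close> can escape around \<open>S\<^sub>1 \<union> S\<^sub>2 \<union> S\<^sub>3\<close>.\<close>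
lemma inside_Un_split:
  fixes S1 S2 S3 :: "complex set"
  assumes "compact S1" "compact S2" "compact S3" "connected S3" "S1 \<inter> S2 \<subseteq> S3"
    and "z \<in> inside (S1 \<union> S2)" "z \<notin> S3"
  shows "z \<in> inside (S1 \<union> S3) \<or> z \<in> inside (S2 \<union> S3)"
proof (rule ccontr)
  assume "\<not> ?thesis"
  moreover have "z \<notin> S1 \<union> S2" using assms(6) inside_no_overlap by blast
  ultimately have z13: "z \<in> outside (S1 \<union> S3)" and z23: "z \<in> outside (S2 \<union> S3)"
    using assms(7) inside_Un_outside by blast+
  have bd: "bounded (S1 \<union> S2 \<union> S3)" using assms(1-3) by (simp add: compact_imp_bounded)
  obtain w where w: "w \<in> outside (S1 \<union> S2 \<union> S3)"
    using outside_bounded_nonempty[OF bd] by blast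
  have outside_comp: "connected_component (- T) z w" if "T \<subseteq> S1 \<union> S2 \<union> S3" "compact T"
    "z \<in> outside T" for T
  proof -
    have "w \<in> outside T" using w outside_mono[OF that(1)] by blast
    then show ?thesis
      using that(3) connected_outside[of T] that(2)
      unfolding connected_component_def
      by (intro exI[of _ "outside T"]) (auto simp: compact_imp_bounded outside_inside)
  qed
  have "(S1 \<union> S3) \<inter> (S2 \<union> S3) = S3" using assms(5) by blast
  then have "connected_component (- ((S1 \<union> S3) \<union> (S2 \<union> S3))) z w"
    using Janiszewski[OF _ _ _ outside_comp[OF _ _ z13] outside_comp[OF _ _ z23]] assms(1-4)
    by (auto intro: compact_imp_closed)
  then obtain T where T: "connected T" "T \<inter> (S1 \<union> S2) = {}" "z \<in> T" "w \<in> T"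
    unfolding connected_component_def by blast
  have "T \<subseteq> inside (S1 \<union> S2)"
    using connected_subset_inside[OF _ T(1,2,3) assms(6)] assms(1,2) by (auto intro: compact_imp_closed)
  then show False using T(4) w outside_mono[of "S1 \<union> S2" "S1 \<union> S2 \<union> S3"] by (auto simp: inside_outside)
qed

lemma Jordan_arcs:
  fixes g h :: "real \<Rightarrow> complex"
  assumes "arc g" "arc h" "pathstart g = u" "pathfinish g = v" "pathstart h = u" "pathfinish h = v"
    and "path_image g \<inter> path_image h = {u, v}"
  shows "inside (path_image g \<union> path_image h) \<noteq> {}"
    and "connected (inside (path_image g \<union> path_image h))"
    and "frontier (inside (path_image g \<union> path_image h)) = path_image g \<union> path_image h"
proof -
  have "simple_path (g +++ reversepath h)"
    using assms by (auto simp: simple_path_join_loop_eq arc_simple_path simple_path_reversepath)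
  moreover have "pathfinish (g +++ reversepath h) = pathstart (g +++ reversepath h)"
    using assms by simp
  moreover have "path_image (g +++ reversepath h) = path_image g \<union> path_image h"
    using assms by (simp add: path_image_join)
  ultimately show "inside (path_image g \<union> path_image h) \<noteq> {}"
    and "connected (inside (path_image g \<union> path_image h))"
    and "frontier (inside (path_image g \<union> path_image h)) = path_image g \<union> path_image h"
    using Jordan_inside_outside by metis+
qed

definition theta_arcs ::
  "(real \<Rightarrow> complex) \<Rightarrow> (real \<Rightarrow> complex) \<Rightarrow> (real \<Rightarrow> complex) \<Rightarrow> complex \<Rightarrow> complex \<Rightarrow> bool" where
  "theta_arcs P1 P2 P3 u v \<longleftrightarrow> u \<noteq> v \<and>
     (\<forall>P \<in> {P1, P2, P3}. arc P \<and> pathstart P = u \<and> pathfinish P = v) \<and>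
     path_image P1 \<inter> path_image P2 = {u, v} \<and> path_image P1 \<inter> path_image P3 = {u, v} \<and>
     path_image P2 \<inter> path_image P3 = {u, v}"

lemma theta_arcs_permute:
  assumes "theta_arcs P1 P2 P3 u v"
  shows "theta_arcs P2 P1 P3 u v" "theta_arcs P1 P3 P2 u v"
  using assms unfolding theta_arcs_def by (auto simp: Int_commute)

text \<open>Otherwise a point inside \<open>P\<^sub>1 \<union> P\<^sub>2\<close> lies inside \<open>P\<^sub>1 \<union> P\<^sub>3\<close> or \<open>P\<^sub>2 \<union> P\<^sub>3\<close>, and the two
  Jordan regions, each missing the other's boundary, coincide.\<close>
lemma theta_arc_meets_inside:
  assumes theta: "theta_arcs P1 P2 P3 u v"
    and c1: "c1 \<in> path_image P1 - {u, v}" and c2: "c2 \<in> path_image P2 - {u, v}"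
  shows "path_image P3 \<inter> inside (path_image P1 \<union> path_image P2) \<noteq> {} \<or>
         path_image P2 \<inter> inside (path_image P1 \<union> path_image P3) \<noteq> {} \<or>
         path_image P1 \<inter> inside (path_image P2 \<union> path_image P3) \<noteq> {}"
proof (rule ccontr)
  let ?S1 = "path_image P1" and ?S2 = "path_image P2" and ?S3 = "path_image P3"
  assume "\<not> ?thesis"
  then have H3: "?S3 \<inter> inside (?S1 \<union> ?S2) = {}" and H2: "?S2 \<inter> inside (?S1 \<union> ?S3) = {}"
    and H1: "?S1 \<inter> inside (?S2 \<union> ?S3) = {}" by blast+
  have arcs: "arc P1" "arc P2" "arc P3"
    and ends: "pathstart P1 = u" "pathfinish P1 = v" "pathstart P2 = u" "pathfinish P2 = v"
      "pathstart P3 = u" "pathfinish P3 = v"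
    and meets: "?S1 \<inter> ?S2 = {u, v}" "?S1 \<inter> ?S3 = {u, v}" "?S2 \<inter> ?S3 = {u, v}"
    using theta unfolding theta_arcs_def by auto
  note J12 = Jordan_arcs[OF arcs(1,2) ends(1-4) meets(1)]
  note J13 = Jordan_arcs[OF arcs(1,3) ends(1,2,5,6) meets(2)]
  note J23 = Jordan_arcs[OF arcs(2,3) ends(3-6) meets(3)]
  have compact: "compact ?S1" "compact ?S2" "compact ?S3"
    using arcs arc_imp_path compact_path_image by blast+
  then have closed: "closed (?S1 \<union> ?S2)" "closed (?S1 \<union> ?S3)" "closed (?S2 \<union> ?S3)"
    by (auto intro: compact_imp_closed)
  obtain z where z: "z \<in> inside (?S1 \<union> ?S2)" using J12(1) by blast
  have "connected ?S3" using arcs(3) arc_imp_path connected_path_image by blast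
  moreover have "?S1 \<inter> ?S2 \<subseteq> ?S3"
    using meets(1) ends(5,6) pathstart_in_path_image pathfinish_in_path_image by (metis empty_subsetI insert_subset)
  moreover have "z \<notin> ?S3" using z H3 by blast
  ultimately have "z \<in> inside (?S1 \<union> ?S3) \<or> z \<in> inside (?S2 \<union> ?S3)"
    by (rule inside_Un_split[OF compact _ _ z])
  then show False
  proof
    assume "z \<in> inside (?S1 \<union> ?S3)"
    moreover have "(?S1 \<union> ?S2) \<inter> inside (?S1 \<union> ?S3) = {}"
      using H2 inside_no_overlap[of "?S1 \<union> ?S3"] by blast
    moreover have "(?S1 \<union> ?S3) \<inter> inside (?S1 \<union> ?S2) = {}"
      using H3 inside_no_overlap[of "?S1 \<union> ?S2"] by blast
    ultimately have "inside (?S1 \<union> ?S2) = inside (?S1 \<union> ?S3)"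
      using inside_eq_if_Int_nonempty[OF closed(1,2) J12(2) J13(2)] z by blast
    then have "?S1 \<union> ?S2 = ?S1 \<union> ?S3" using J12(3) J13(3) by metis
    then show False using c2 meets by blast
  next
    assume "z \<in> inside (?S2 \<union> ?S3)"
    moreover have "(?S1 \<union> ?S2) \<inter> inside (?S2 \<union> ?S3) = {}"
      using H1 inside_no_overlap[of "?S2 \<union> ?S3"] by blast
    moreover have "(?S2 \<union> ?S3) \<inter> inside (?S1 \<union> ?S2) = {}"
      using H3 inside_no_overlap[of "?S1 \<union> ?S2"] by blast
    ultimately have "inside (?S1 \<union> ?S2) = inside (?S2 \<union> ?S3)"
      using inside_eq_if_Int_nonempty[OF closed(1,3) J12(2) J23(2)] z by blast
    then have "?S1 \<union> ?S2 = ?S2 \<union> ?S3" using J12(3) J23(3) by metis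
    then show False using c1 meets by blast
  qed
qed

text \<open>The arc \<open>P\<^sub>3\<close> splits the inside of \<open>P\<^sub>1 \<union> P\<^sub>2\<close> into the insides of \<open>P\<^sub>1 \<union> P\<^sub>3\<close> and
  \<open>P\<^sub>2 \<union> P\<^sub>3\<close>; whichever of these two regions or the outside of \<open>P\<^sub>1 \<union> P\<^sub>2\<close> contains \<open>x\<close>, some
  \<open>c\<^sub>i\<close> lies off it, yet \<open>C\<^sub>i\<close> joins \<open>x\<close> to \<open>c\<^sub>i\<close> without meeting its boundary.\<close>
lemma theta_entered_no_common_neighbour:
  assumes theta: "theta_arcs P1 P2 P3 u v"
    and enters: "path_image P3 \<inter> inside (path_image P1 \<union> path_image P2) \<noteq> {}"
    and c: "c1 \<in> path_image P1" "c2 \<in> path_image P2" "c3 \<in> path_image P3 - {u, v}"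
    and x: "x \<notin> path_image P1 \<union> path_image P2 \<union> path_image P3"
    and C1: "connected C1" "x \<in> C1" "c1 \<in> C1" "C1 \<inter> (path_image P2 \<union> path_image P3) = {}"
    and C2: "connected C2" "x \<in> C2" "c2 \<in> C2" "C2 \<inter> (path_image P1 \<union> path_image P3) = {}"
    and C3: "connected C3" "x \<in> C3" "c3 \<in> C3" "C3 \<inter> (path_image P1 \<union> path_image P2) = {}"
  shows False
proof -
  let ?S1 = "path_image P1" and ?S2 = "path_image P2" and ?S3 = "path_image P3"
  have "compact ?S1" "compact ?S2" "compact ?S3"
    using theta arc_imp_path compact_path_image unfolding theta_arcs_def by blast+
  then have closed: "closed (?S1 \<union> ?S2)" "closed (?S1 \<union> ?S3)" "closed (?S2 \<union> ?S3)"
    by (auto intro: compact_imp_closed)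
  obtain split: "inside (?S1 \<union> ?S3) \<union> inside (?S2 \<union> ?S3) \<union> (?S3 - {u, v}) = inside (?S1 \<union> ?S2)"
    using split_inside_simple_closed_curve[of P1 u v P2 P3] theta enters
    unfolding theta_arcs_def by (auto simp: arc_imp_simple_path)
  have "x \<in> inside (?S1 \<union> ?S2) \<or> x \<in> outside (?S1 \<union> ?S2)"
    using x inside_Un_outside by blast
  then show False
  proof
    assume "x \<in> outside (?S1 \<union> ?S2)"
    then have "C3 \<subseteq> outside (?S1 \<union> ?S2)" by (rule connected_subset_outside[OF closed(1) C3(1,4,2)])
    then show False using C3(3) c(3) split inside_outside by blast
  next
    assume "x \<in> inside (?S1 \<union> ?S2)"
    then have "x \<in> inside (?S1 \<union> ?S3) \<or> x \<in> inside (?S2 \<union> ?S3)" using split x by blast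
    then show False
    proof
      assume "x \<in> inside (?S1 \<union> ?S3)"
      then have "C2 \<subseteq> inside (?S1 \<union> ?S3)" by (rule connected_subset_inside[OF closed(2) C2(1,4,2)])
      then show False using C2(3) c(2) split inside_no_overlap[of "?S1 \<union> ?S2"] by blast
    next
      assume "x \<in> inside (?S2 \<union> ?S3)"
      then have "C1 \<subseteq> inside (?S2 \<union> ?S3)" by (rule connected_subset_inside[OF closed(3) C1(1,4,2)])
      then show False using C1(3) c(1) split inside_no_overlap[of "?S1 \<union> ?S2"] by blast
    qed
  qed
qed

lemma theta_no_common_neighbour:
  assumes theta: "theta_arcs P1 P2 P3 u v"
    and c: "c1 \<in> path_image P1 - {u, v}" "c2 \<in> path_image P2 - {u, v}" "c3 \<in> path_image P3 - {u, v}"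
    and x: "x \<notin> path_image P1 \<union> path_image P2 \<union> path_image P3"
    and C1: "connected C1" "x \<in> C1" "c1 \<in> C1" "C1 \<inter> (path_image P2 \<union> path_image P3) = {}"
    and C2: "connected C2" "x \<in> C2" "c2 \<in> C2" "C2 \<inter> (path_image P1 \<union> path_image P3) = {}"
    and C3: "connected C3" "x \<in> C3" "c3 \<in> C3" "C3 \<inter> (path_image P1 \<union> path_image P2) = {}"
  shows False
  using theta_arc_meets_inside[OF theta c(1,2)]
proof (elim disjE)
  assume "path_image P3 \<inter> inside (path_image P1 \<union> path_image P2) \<noteq> {}"
  then show False
    using theta_entered_no_common_neighbour[OF theta _ _ _ c(3) x C1 C2 C3] c by blast
next
  assume "path_image P2 \<inter> inside (path_image P1 \<union> path_image P3) \<noteq> {}"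
  then show False
    using theta_entered_no_common_neighbour[OF theta_arcs_permute(2)[OF theta]
        _ _ _ c(2) _ C1(1-3) _ C3(1-3) _ C2(1-3)]
      c x C1(4) C2(4) C3(4) by blast
next
  assume "path_image P1 \<inter> inside (path_image P2 \<union> path_image P3) \<noteq> {}"
  then show False
    using theta_entered_no_common_neighbour[OF theta_arcs_permute(2)[OF theta_arcs_permute(1)[OF theta]]
        _ _ _ c(1) _ C2(1-3) _ C3(1-3) _ C1(1-3)]
      c x C1(4) C2(4) C3(4) by blast
qed

lemma less_3_cases_iff: "(n::nat) < 3 \<longleftrightarrow> n = 0 \<or> n = 1 \<or> n = 2"
  by auto

text \<open>Joining \<open>A\<^sub>0\<close> to \<open>A\<^sub>1\<close> through each \<open>B\<^sub>k\<close> gives a theta graph, and \<open>A\<^sub>2\<close> is a common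
  neighbour of its three arcs.\<close>
lemma K33_not_planar:
  fixes A B :: "nat \<Rightarrow> complex" and g :: "nat \<Rightarrow> nat \<Rightarrow> real \<Rightarrow> complex"
  assumes distinct: "distinct [A 0, A 1, A 2, B 0, B 1, B 2]"
    and arcs: "\<And>i j. i < 3 \<Longrightarrow> j < 3 \<Longrightarrow> arc (g i j) \<and> pathstart (g i j) = A i \<and> pathfinish (g i j) = B j"
    and meets: "\<And>i j k l. i < 3 \<Longrightarrow> j < 3 \<Longrightarrow> k < 3 \<Longrightarrow> l < 3 \<Longrightarrow> (i, j) \<noteq> (k, l) \<Longrightarrow>
      path_image (g i j) \<inter> path_image (g k l) \<subseteq> {A i, B j} \<inter> {A k, B l}"
  shows False
proof -
  define P where "P k = g 0 k +++ reversepath (g 1 k)" for k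
  have A_ne: "A i \<noteq> A k" if "i < 3" "k < 3" "i \<noteq> k" for i k
    using distinct that by (auto simp: less_3_cases_iff)
  have B_ne: "B j \<noteq> B l" if "j < 3" "l < 3" "j \<noteq> l" for j l
    using distinct that by (auto simp: less_3_cases_iff)
  have AB_ne: "A i \<noteq> B j" if "i < 3" "j < 3" for i j
    using distinct that by (auto simp: less_3_cases_iff)
  have P: "arc (P k) \<and> pathstart (P k) = A 0 \<and> pathfinish (P k) = A 1 \<and>
      path_image (P k) = path_image (g 0 k) \<union> path_image (g 1 k)" if "k < 3" for k
  proof -
    have "path_image (g 0 k) \<inter> path_image (g 1 k) \<subseteq> {B k}"
      using meets[of 0 k 1 k] A_ne[of 0 1] that by auto
    then have "arc (P k)"
      unfolding P_def using arcs[of 0 k] arcs[of 1 k] that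
      by (subst arc_join_eq) (auto simp: arc_reversepath)
    then show ?thesis using arcs[of 0 k] arcs[of 1 k] that by (simp add: P_def path_image_join)
  qed
  have meets_P: "path_image (g i k) \<inter> path_image (P l) \<subseteq> {A i} \<inter> {A 0, A 1}"
    if "i < 3" "k < 3" "l < 3" "k \<noteq> l" for i k l
  proof -
    have "path_image (g i k) \<inter> path_image (g j l) \<subseteq> {A i} \<inter> {A 0, A 1}" if "j < 2" for j
      using meets[of i k j l] B_ne[of k l] AB_ne[of i l] AB_ne[of j k] \<open>i < 3\<close> \<open>k < 3\<close> \<open>l < 3\<close> \<open>k \<noteq> l\<close> that
      by (auto simp: less_2_cases_iff)
    from this[of 0] this[of 1] show ?thesis using P[OF \<open>l < 3\<close>] by auto
  qed
  have theta: "theta_arcs (P 0) (P 1) (P 2) (A 0) (A 1)"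
  proof -
    have "path_image (P k) \<inter> path_image (P l) = {A 0, A 1}" if "k < 3" "l < 3" "k \<noteq> l" for k l
    proof
      show "path_image (P k) \<inter> path_image (P l) \<subseteq> {A 0, A 1}"
        using meets_P[of 0 k l] meets_P[of 1 k l] P[OF \<open>k < 3\<close>] that by auto
      show "{A 0, A 1} \<subseteq> path_image (P k) \<inter> path_image (P l)"
        using P[OF \<open>k < 3\<close>] P[OF \<open>l < 3\<close>] pathstart_in_path_image[of "P k"]
          pathfinish_in_path_image[of "P k"] pathstart_in_path_image[of "P l"]
          pathfinish_in_path_image[of "P l"] by simp
    qed
    then show ?thesis unfolding theta_arcs_def using P A_ne[of 0 1] by simp
  qed
  have B_in_P: "B k \<in> path_image (P k) - {A 0, A 1}" if "k < 3" for k
    using P[OF that] arcs[of 0 k] pathfinish_in_path_image[of "g 0 k"] AB_ne[of 0 k] AB_ne[of 1 k] that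
    by auto
  have A2_notin_P: "A 2 \<notin> path_image (P k)" if "k < 3" for k
  proof
    assume "A 2 \<in> path_image (P k)"
    moreover have "path_image (g 2 k) \<inter> path_image (g i k) \<subseteq> {B k}" if "i < 2" for i
      using meets[of 2 k i k] A_ne[of 2 i] \<open>k < 3\<close> that by auto
    from this[of 0] this[of 1] have "path_image (g 2 k) \<inter> path_image (P k) \<subseteq> {B k}"
      using P[OF that] by auto
    moreover have "A 2 \<in> path_image (g 2 k)"
      using arcs[of 2 k] pathstart_in_path_image[of "g 2 k"] that by simp
    ultimately show False using AB_ne[of 2 k] that by auto
  qed
  have spoke: "connected (path_image (g 2 k)) \<and> A 2 \<in> path_image (g 2 k) \<and> B k \<in> path_image (g 2 k)"
    if "k < 3" for k
    using arcs[of 2 k] that arc_imp_path connected_path_image pathstart_in_path_image[of "g 2 k"]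
      pathfinish_in_path_image[of "g 2 k"] by auto
  have spoke_avoids: "path_image (g 2 k) \<inter> path_image (P l) = {}" if "k < 3" "l < 3" "k \<noteq> l" for k l
    using meets_P[of 2 k l] A_ne[of 2 0] A_ne[of 2 1] that by auto
  show False
  proof (rule theta_no_common_neighbour[OF theta B_in_P[of 0] B_in_P[of 1] B_in_P[of 2],
        of "A 2" "path_image (g 2 0)" "path_image (g 2 1)" "path_image (g 2 2)"])
  qed (use A2_notin_P spoke spoke_avoids in \<open>auto simp: Int_Un_distrib\<close>)
qed

section \<open>Drawings\<close>

lemma drawing_edges_meet:
  assumes drawing: "is_drawing V E pos crv" and "e \<in> E" "f \<in> E" "e \<noteq> f" "e \<subseteq> V" "f \<subseteq> V"
    and y: "y \<in> path_image (crv e)" "y \<in> path_image (crv f)"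
  shows "y \<in> pos ` (e \<inter> f) \<or> crosses_at E pos crv e f y"
proof (cases "y \<in> pos ` V")
  case True
  have "inj_on pos V" and "path_image (crv e) \<inter> pos ` V = pos ` e" "path_image (crv f) \<inter> pos ` V = pos ` f"
    using drawing assms(2,3) unfolding is_drawing_def by auto
  then obtain v w where "v \<in> e" "w \<in> f" "pos v = y" "pos w = y" "v = w"
    using True y assms(5,6) by (smt (verit) IntI image_iff inj_onD subset_iff)
  then show ?thesis by blast
next
  case False
  then have "y \<notin> pos ` e" "y \<notin> pos ` f" using assms(5,6) by auto
  then show ?thesis using assms(2-4) y unfolding crosses_at_def edge_interior_def by blast
qed

definition arc_from :: "complex \<Rightarrow> (real \<Rightarrow> complex) \<Rightarrow> real \<Rightarrow> complex" where
  "arc_from a g = (if pathstart g = a then g else reversepath g)"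

lemma arc_from:
  assumes "arc g" "{pathstart g, pathfinish g} = {a, b}" "a \<noteq> b"
  shows "arc (arc_from a g)" "pathstart (arc_from a g) = a" "pathfinish (arc_from a g) = b"
    and "path_image (arc_from a g) = path_image g"
  using assms by (auto simp: arc_from_def doubleton_eq_iff arc_reversepath)

definition K33_in :: "'a set set \<Rightarrow> (nat \<Rightarrow> 'a) \<Rightarrow> (nat \<Rightarrow> 'a) \<Rightarrow> bool" where
  "K33_in E a b \<longleftrightarrow> distinct [a 0, a 1, a 2, b 0, b 1, b 2] \<and> (\<forall>i<3. \<forall>j<3. {a i, b j} \<in> E)"

lemma drawing_K33_crossing:
  assumes drawing: "is_drawing V E pos crv" and E: "\<forall>e\<in>E. e \<subseteq> V" and K33: "K33_in E a b"
  obtains i j k l p where "i < 3" "j < 3" "k < 3" "l < 3" "crosses_at E pos crv {a i, b j} {a k, b l} p"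
proof (rule ccontr)
  note crossing = that
  assume "\<not> thesis"
  with crossing have no_crossing: "\<not> crosses_at E pos crv {a i, b j} {a k, b l} p"
    if "i < 3" "j < 3" "k < 3" "l < 3" for i j k l p
    using that by blast
  define g where "g i j = arc_from (pos (a i)) (crv {a i, b j})" for i j
  have edge: "{a i, b j} \<in> E" if "i < 3" "j < 3" for i j
    using K33 that unfolding K33_in_def by blast
  have inj: "inj_on pos V" using drawing unfolding is_drawing_def by blast
  have V: "a i \<in> V" "b j \<in> V" if "i < 3" "j < 3" for i j
    using E edge[OF that] by auto
  have distinct: "distinct [a 0, a 1, a 2, b 0, b 1, b 2]" using K33 unfolding K33_in_def by blast
  moreover have "set [a 0, a 1, a 2, b 0, b 1, b 2] \<subseteq> V" using V[of 0 0] V[of 1 1] V[of 2 2] by auto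
  ultimately have "distinct (map pos [a 0, a 1, a 2, b 0, b 1, b 2])"
    using distinct_map inj_on_subset[OF inj] by blast
  then have distinct_pos: "distinct [pos (a 0), pos (a 1), pos (a 2), pos (b 0), pos (b 1), pos (b 2)]"
    by (simp only: list.map)
  have g: "arc (g i j) \<and> pathstart (g i j) = pos (a i) \<and> pathfinish (g i j) = pos (b j) \<and>
      path_image (g i j) = path_image (crv {a i, b j})" if "i < 3" "j < 3" for i j
  proof -
    have "pos (a i) \<noteq> pos (b j)" using distinct_pos that by (auto simp: less_3_cases_iff)
    then show ?thesis
      unfolding g_def using arc_from[of "crv {a i, b j}" "pos (a i)" "pos (b j)"] drawing edge[OF that]
      unfolding is_drawing_def by auto
  qed
  show False
  proof (rule K33_not_planar[OF distinct_pos])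
    show "arc (g i j) \<and> pathstart (g i j) = pos (a i) \<and> pathfinish (g i j) = pos (b j)"
      if "i < 3" "j < 3" for i j
      using g[OF that] by blast
    show "path_image (g i j) \<inter> path_image (g k l) \<subseteq> {pos (a i), pos (b j)} \<inter> {pos (a k), pos (b l)}"
      if ij: "i < 3" "j < 3" and kl: "k < 3" "l < 3" and "(i, j) \<noteq> (k, l)" for i j k l
    proof
      fix y assume y: "y \<in> path_image (g i j) \<inter> path_image (g k l)"
      have "{a i, b j} \<noteq> {a k, b l}"
        using distinct ij kl \<open>(i, j) \<noteq> (k, l)\<close> by (auto simp: doubleton_eq_iff less_3_cases_iff)
      moreover have "y \<in> path_image (crv {a i, b j})" "y \<in> path_image (crv {a k, b l})"
        using y g[OF ij] g[OF kl] by auto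
      ultimately have "y \<in> pos ` ({a i, b j} \<inter> {a k, b l}) \<or> crosses_at E pos crv {a i, b j} {a k, b l} y"
        using drawing_edges_meet[OF drawing edge[OF ij] edge[OF kl]] E edge[OF ij] edge[OF kl] by blast
      then show "y \<in> {pos (a i), pos (b j)} \<inter> {pos (a k), pos (b l)}"
        using no_crossing[OF ij kl] by auto
    qed
  qed
qed

lemma K33_in_Diff_edge:
  assumes "K33_in E a b" "r \<subseteq> {a 0, a 1, a 2} \<or> r \<subseteq> {b 0, b 1, b 2}"
  shows "K33_in (E - {r}) a b"
proof -
  have "distinct [a 0, a 1, a 2, b 0, b 1, b 2]" using assms(1) unfolding K33_in_def by blast
  then have "\<not> {a i, b j} \<subseteq> {a 0, a 1, a 2}" "\<not> {a i, b j} \<subseteq> {b 0, b 1, b 2}"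
    if "i < 3" "j < 3" for i j
    using that by (auto simp: less_3_cases_iff)
  then have "{a i, b j} \<noteq> r" if "i < 3" "j < 3" for i j
    using assms(2) that by blast
  then show ?thesis using assms(1) unfolding K33_in_def by blast
qed

lemma one_planar_crossing_unique:
  assumes "one_planar_drawing V E pos crv" "crosses_at E pos crv e f p" "crosses_at E pos crv e g q"
  shows "f = g \<and> p = q"
proof -
  have "\<forall>e f g p q. crosses_at E pos crv e f p \<and> crosses_at E pos crv e g q \<longrightarrow> f = g \<and> p = q"
    using assms(1) unfolding one_planar_drawing_def by (rule conjunct2[OF conjunct2])
  then show ?thesis using assms(2,3) by blast
qed

lemma one_planar_crossings_at_point_share_edge:
  assumes "one_planar_drawing V E pos crv" "crosses_at E pos crv e0 f0 p" "crosses_at E pos crv e f p"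
  shows "e0 \<in> {e, f}"
proof (rule ccontr)
  assume "e0 \<notin> {e, f}"
  then have "crosses_at E pos crv e0 e p" "crosses_at E pos crv e0 f p"
    using assms(2,3) unfolding crosses_at_def by auto
  then have "e = f" using one_planar_crossing_unique[OF assms(1)] by blast
  then show False using assms(3) unfolding crosses_at_def by blast
qed

lemma one_planar_common_crossed_edge:
  assumes drawing: "one_planar_drawing V E pos crv" and "E \<noteq> {}"
    and same_point: "\<And>e1 f1 p e2 f2 q. crosses_at E pos crv e1 f1 p \<Longrightarrow> crosses_at E pos crv e2 f2 q \<Longrightarrow> p = q"
  obtains r where "r \<in> E" "\<And>e f p. crosses_at E pos crv e f p \<Longrightarrow> r \<in> {e, f}"
proof (cases "\<exists>e f p. crosses_at E pos crv e f p")
  case True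
  then obtain e0 f0 p0 where c0: "crosses_at E pos crv e0 f0 p0" by blast
  show thesis
  proof (rule that[of e0])
    show "e0 \<in> E" using c0 unfolding crosses_at_def by blast
    show "e0 \<in> {e, f}" if "crosses_at E pos crv e f p" for e f p
      using one_planar_crossings_at_point_share_edge[OF drawing c0] same_point[OF c0 that] that by blast
  qed
next
  case False
  obtain r where "r \<in> E" using \<open>E \<noteq> {}\<close> by blast
  then show thesis using that False by blast
qed

lemma one_planar_crossing_card:
  assumes "one_planar_drawing V E pos crv" "\<forall>e\<in>E. e \<subseteq> V \<and> card e = 2"
    and "crosses_at E pos crv e f p"
  shows "e \<union> f \<subseteq> V" "card (e \<union> f) = 4"
proof -
  have "e \<in> E" "f \<in> E" using assms(3) unfolding crosses_at_def by auto
  then have "e \<subseteq> V" "card e = 2" "f \<subseteq> V" "card f = 2" using assms(2) by auto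
  moreover have "\<forall>e f p. crosses_at E pos crv e f p \<longrightarrow> e \<inter> f = {}"
    using assms(1) unfolding one_planar_drawing_def by (rule conjunct1[OF conjunct2])
  then have "e \<inter> f = {}" using assms(3) by blast
  ultimately show "e \<union> f \<subseteq> V" "card (e \<union> f) = 4"
    using card_Un_disjoint[of e f] card.infinite[of e] card.infinite[of f] by auto
qed

lemma card_Int_lower_bound:
  assumes "finite V" "X \<subseteq> V" "Y \<subseteq> V"
  shows "card X + card Y \<le> card V + card (X \<inter> Y)"
proof -
  have "finite X" "finite Y" using assms finite_subset by auto
  then have "card X + card Y = card (X \<union> Y) + card (X \<inter> Y)" by (rule card_Un_Int)
  moreover have "card (X \<union> Y) \<le> card V" using assms by (intro card_mono) auto
  ultimately show ?thesis by linarith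
qed

lemma has_1planar_drawing_le_mono:
  "has_1planar_drawing_le V E i \<Longrightarrow> i \<le> j \<Longrightarrow> has_1planar_drawing_le V E j"
  unfolding has_1planar_drawing_le_def by (meson order_trans)

definition straight_edges :: "('a \<Rightarrow> complex) \<Rightarrow> 'a set \<Rightarrow> real \<Rightarrow> complex" where
  "straight_edges pos e = linepath (pos (SOME x. x \<in> e)) (pos (SOME y. y \<in> e \<and> y \<noteq> (SOME x. x \<in> e)))"

lemma straight_edges_doubleton:
  assumes "a \<noteq> b"
  obtains "straight_edges pos {a, b} = linepath (pos a) (pos b)"
    | "straight_edges pos {a, b} = linepath (pos b) (pos a)"
proof -
  define x where "x = (SOME x. x \<in> {a, b})"
  have x: "x \<in> {a, b}" unfolding x_def by (rule someI[of _ a]) simp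
  define y where "y = (SOME y. y \<in> {a, b} \<and> y \<noteq> x)"
  have y: "y \<in> {a, b} \<and> y \<noteq> x" unfolding y_def by (rule someI_ex) (use x assms in auto)
  have "straight_edges pos {a, b} = linepath (pos x) (pos y)"
    unfolding straight_edges_def x_def[symmetric] y_def[symmetric] ..
  then show thesis using that x y by auto
qed

lemma path_image_straight_edges:
  "a \<noteq> b \<Longrightarrow> path_image (straight_edges pos {a, b}) = closed_segment (pos a) (pos b)"
  by (cases rule: straight_edges_doubleton[of a b pos]) (auto simp: closed_segment_commute)

lemma edge_interior_straight_edges:
  "a \<noteq> b \<Longrightarrow> edge_interior pos (straight_edges pos) {a, b} = open_segment (pos a) (pos b)"
  by (simp add: edge_interior_def open_segment_def path_image_straight_edges)

lemma is_drawing_straight_edges: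
  assumes inj: "inj_on pos V" and doubletons: "\<forall>e\<in>E. card e = 2"
    and segments: "\<And>a b. {a, b} \<in> E \<Longrightarrow> a \<in> V \<and> b \<in> V \<and>
      (\<forall>w \<in> V. w \<noteq> a \<longrightarrow> w \<noteq> b \<longrightarrow> pos w \<notin> closed_segment (pos a) (pos b))"
  shows "is_drawing V E pos (straight_edges pos)"
proof -
  have "arc (straight_edges pos e) \<and>
      {pathstart (straight_edges pos e), pathfinish (straight_edges pos e)} = pos ` e \<and>
      path_image (straight_edges pos e) \<inter> pos ` V = pos ` e" if e: "e \<in> E" for e
  proof -
    obtain a b where ab: "e = {a, b}" "a \<noteq> b" using doubletons e card_2_iff by metis
    have V: "a \<in> V" "b \<in> V"
      and off: "\<forall>w \<in> V. w \<noteq> a \<longrightarrow> w \<noteq> b \<longrightarrow> pos w \<notin> closed_segment (pos a) (pos b)"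
      using segments e ab(1) by blast+
    have "pos a \<noteq> pos b" using inj V ab(2) by (auto dest: inj_onD)
    consider "straight_edges pos e = linepath (pos a) (pos b)"
      | "straight_edges pos e = linepath (pos b) (pos a)"
      unfolding ab(1) by (rule straight_edges_doubleton[OF \<open>a \<noteq> b\<close>])
    then have "arc (straight_edges pos e) \<and>
        {pathstart (straight_edges pos e), pathfinish (straight_edges pos e)} = pos ` e"
      using \<open>pos a \<noteq> pos b\<close> ab(1) by cases (auto simp: arc_linepath)
    moreover have "closed_segment (pos a) (pos b) \<inter> pos ` V = pos ` e"
    proof
      show "closed_segment (pos a) (pos b) \<inter> pos ` V \<subseteq> pos ` e" using off ab(1) by blast
      show "pos ` e \<subseteq> closed_segment (pos a) (pos b) \<inter> pos ` V" using ab(1) V by auto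
    qed
    ultimately show ?thesis using path_image_straight_edges[OF \<open>a \<noteq> b\<close>, of pos] ab(1) by simp
  qed
  then show ?thesis using inj unfolding is_drawing_def by blast
qed

lemma open_segment_Int_subsetI:
  fixes a b c d :: complex
  assumes "\<And>u v. 0 < u \<Longrightarrow> u < 1 \<Longrightarrow> 0 < v \<Longrightarrow> v < 1 \<Longrightarrow>
    (1 - u) * Re a + u * Re b = (1 - v) * Re c + v * Re d \<Longrightarrow>
    (1 - u) * Im a + u * Im b = (1 - v) * Im c + v * Im d \<Longrightarrow>
    Complex ((1 - u) * Re a + u * Re b) ((1 - u) * Im a + u * Im b) \<in> S"
  shows "open_segment a b \<inter> open_segment c d \<subseteq> S"
proof
  fix p assume "p \<in> open_segment a b \<inter> open_segment c d"
  then obtain u v where uv: "0 < u" "u < 1" "0 < v" "v < 1"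
    "p = (1 - u) *\<^sub>R a + u *\<^sub>R b" "p = (1 - v) *\<^sub>R c + v *\<^sub>R d"
    by (auto simp: in_segment)
  have ab: "p = Complex ((1 - u) * Re a + u * Re b) ((1 - u) * Im a + u * Im b)"
    using uv(5) by (simp add: complex_eq_iff)
  have cd: "p = Complex ((1 - v) * Re c + v * Re d) ((1 - v) * Im c + v * Im d)"
    using uv(6) by (simp add: complex_eq_iff)
  show "p \<in> S" using assms[OF uv(1-4)] ab cd by simp
qed

lemma open_segment_Int_emptyI:
  fixes a b c d :: complex
  assumes "\<And>u v. 0 < u \<Longrightarrow> u < 1 \<Longrightarrow> 0 < v \<Longrightarrow> v < 1 \<Longrightarrow>
    (1 - u) * Re a + u * Re b = (1 - v) * Re c + v * Re d \<Longrightarrow>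
    (1 - u) * Im a + u * Im b = (1 - v) * Im c + v * Im d \<Longrightarrow> False"
  shows "open_segment a b \<inter> open_segment c d = {}"
  using open_segment_Int_subsetI[of a b c d "{}"] assms by blast


section \<open>The join \<open>C\<^sub>3 + P\<^sub>3\<close>\<close>

abbreviation C3P3_verts :: "(nat + nat) set" where
  "C3P3_verts \<equiv> join_verts (cycle_verts 3) (path_verts 3)"

abbreviation C3P3_edges :: "(nat + nat) set set" where
  "C3P3_edges \<equiv> join_edges (cycle_verts 3) (cycle_edges 3) (path_verts 3) (path_edges 3)"

lemma atLeast0_lessThan_3: "{0..<3::nat} = {0, 1, 2}"
  by auto

lemma C3P3_verts_eq: "C3P3_verts = {Inl 0, Inl 1, Inl 2, Inr 0, Inr 1, Inr 2}"
  by (auto simp: join_verts_def cycle_verts_def path_verts_def atLeast0_lessThan_3)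

lemma C3P3_edges_eq:
  "C3P3_edges =
     {{Inl 0, Inl 1}, {Inl 1, Inl 2}, {Inl 2, Inl 0}, {Inr 0, Inr 1}, {Inr 1, Inr 2},
      {Inl 0, Inr 0}, {Inl 0, Inr 1}, {Inl 0, Inr 2}, {Inl 1, Inr 0}, {Inl 1, Inr 1}, {Inl 1, Inr 2},
      {Inl 2, Inr 0}, {Inl 2, Inr 1}, {Inl 2, Inr 2}}"
proof -
  have "cycle_edges 3 = (\<lambda>i. {i, (i + 1) mod 3}) ` {0..<3}"
    unfolding cycle_edges_def by auto
  then have cycle: "cycle_edges 3 = {{0, 1}, {1, 2}, {2, 0}}"
    by (simp add: atLeast0_lessThan_3 numeral_2_eq_2)
  have "path_edges 3 = (\<lambda>i. {i, i + 1}) ` {0, 1}"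
    unfolding path_edges_def by (auto simp: less_Suc_eq numeral_3_eq_3)
  then have path: "path_edges 3 = {{0, 1}, {1, 2}}"
    by (simp add: numeral_2_eq_2)
  have "{{Inl a, Inr b} | a b. a \<in> cycle_verts 3 \<and> b \<in> path_verts 3} =
      (\<lambda>(a, b). {Inl a, Inr b}) ` ({0, 1, 2} \<times> {0, 1, 2 :: nat})"
    unfolding cycle_verts_def path_verts_def atLeast0_lessThan_3 by blast
  then show ?thesis
    unfolding join_edges_def cycle path by (simp add: insert_commute)
qed

lemma C3P3_edges_doubletons: "\<forall>e\<in>C3P3_edges. e \<subseteq> C3P3_verts \<and> card e = 2"
  unfolding C3P3_edges_eq C3P3_verts_eq by auto

text \<open>The only non-adjacent pair is \<open>Inr 0, Inr 2\<close>, so any bipartition into triples with both on one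
  side spans a \<open>K\<^sub>3\<^sub>,\<^sub>3\<close>; every edge lies inside a side of one of the four bipartitions below.\<close>
lemma C3P3_K33_avoiding:
  assumes "r \<in> C3P3_edges"
  obtains a b where "K33_in (C3P3_edges - {r}) a b"
proof -
  have K33: "K33_in C3P3_edges ((!) [Inr 0, Inr 2, Inr 1]) ((!) [Inl 0, Inl 1, Inl 2])"
    "K33_in C3P3_edges ((!) [Inr 0, Inr 2, Inl 0]) ((!) [Inl 1, Inl 2, Inr 1])"
    "K33_in C3P3_edges ((!) [Inr 0, Inr 2, Inl 1]) ((!) [Inl 0, Inl 2, Inr 1])"
    "K33_in C3P3_edges ((!) [Inr 0, Inr 2, Inl 2]) ((!) [Inl 0, Inl 1, Inr 1])"
    unfolding K33_in_def C3P3_edges_eq by (simp_all add: less_3_cases_iff doubleton_eq_iff)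
  consider "r \<subseteq> {Inr 0, Inr 2, Inr 1} \<or> r \<subseteq> {Inl 0, Inl 1, Inl 2}"
    | "r \<subseteq> {Inr 0, Inr 2, Inl 0} \<or> r \<subseteq> {Inl 1, Inl 2, Inr 1}"
    | "r \<subseteq> {Inr 0, Inr 2, Inl 1} \<or> r \<subseteq> {Inl 0, Inl 2, Inr 1}"
    | "r \<subseteq> {Inr 0, Inr 2, Inl 2} \<or> r \<subseteq> {Inl 0, Inl 1, Inr 1}"
    using assms unfolding C3P3_edges_eq by auto
  then show thesis
  proof cases
    case 1
    show thesis by (rule that[OF K33_in_Diff_edge[OF K33(1)]]) (use 1 in simp)
  next
    case 2
    show thesis by (rule that[OF K33_in_Diff_edge[OF K33(2)]]) (use 2 in simp)
  next
    case 3
    show thesis by (rule that[OF K33_in_Diff_edge[OF K33(3)]]) (use 3 in simp)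
  next
    case 4
    show thesis by (rule that[OF K33_in_Diff_edge[OF K33(4)]]) (use 4 in simp)
  qed
qed

lemma C3P3_not_1planar_le_1: "\<not> has_1planar_drawing_le C3P3_verts C3P3_edges 1"
proof
  assume "has_1planar_drawing_le C3P3_verts C3P3_edges 1"
  then obtain pos crv where drawing: "one_planar_drawing C3P3_verts C3P3_edges pos crv"
    and le_1: "\<And>e1 f1 p e2 f2 q. crosses_at C3P3_edges pos crv e1 f1 p \<Longrightarrow>
      crosses_at C3P3_edges pos crv e2 f2 q \<Longrightarrow> p \<noteq> q \<Longrightarrow> card ((e1 \<union> f1) \<inter> (e2 \<union> f2)) \<le> 1"
    unfolding has_1planar_drawing_le_def by meson
  note crossing_card = one_planar_crossing_card[OF drawing C3P3_edges_doubletons]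
  have same_point: "p = q"
    if c: "crosses_at C3P3_edges pos crv e1 f1 p" "crosses_at C3P3_edges pos crv e2 f2 q" for e1 f1 p e2 f2 q
  proof (rule ccontr)
    assume "p \<noteq> q"
    have "card (e1 \<union> f1) + card (e2 \<union> f2) \<le> card C3P3_verts + card ((e1 \<union> f1) \<inter> (e2 \<union> f2))"
      by (rule card_Int_lower_bound) (use crossing_card[OF c(1)] crossing_card[OF c(2)] in
        \<open>simp_all add: C3P3_verts_eq\<close>)
    then show False
      using le_1[OF c \<open>p \<noteq> q\<close>] crossing_card[OF c(1)] crossing_card[OF c(2)] by (simp add: C3P3_verts_eq)
  qed
  have "C3P3_edges \<noteq> {}" by (simp add: C3P3_edges_eq)
  then obtain r where r: "r \<in> C3P3_edges" "\<And>e f p. crosses_at C3P3_edges pos crv e f p \<Longrightarrow> r \<in> {e, f}"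
    using one_planar_common_crossed_edge[OF drawing] same_point by metis
  obtain a b where K33: "K33_in (C3P3_edges - {r}) a b" using C3P3_K33_avoiding[OF r(1)] .
  then have "K33_in C3P3_edges a b" unfolding K33_in_def by blast
  moreover have "is_drawing C3P3_verts C3P3_edges pos crv"
    using drawing unfolding one_planar_drawing_def by (rule conjunct1)
  ultimately obtain i j k l p where ijkl: "i < 3" "j < 3" "k < 3" "l < 3"
    and "crosses_at C3P3_edges pos crv {a i, b j} {a k, b l} p"
    using drawing_K33_crossing C3P3_edges_doubletons by metis
  then have "r \<in> {{a i, b j}, {a k, b l}}" using r(2) by blast
  then show False using K33 ijkl unfolding K33_in_def by blast
qed

text \<open>In this drawing exactly two pairs of edges cross: \<open>{Inl 2, Inl 0}\<close> with \<open>{Inr 1, Inr 2}\<close>,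
  and \<open>{Inl 0, Inr 0}\<close> with \<open>{Inl 1, Inr 1}\<close>.\<close>
fun C3P3_pos :: "nat + nat \<Rightarrow> complex" where
  "C3P3_pos (Inl i) = [Complex (-2) (-2), Complex 2 3, Complex 3 (-3)] ! i"
| "C3P3_pos (Inr j) = [Complex 2 0, Complex 0 (-2), Complex (-3) (-3)] ! j"

lemma C3P3_straight_drawing: "is_drawing C3P3_verts C3P3_edges C3P3_pos (straight_edges C3P3_pos)"
proof (rule is_drawing_straight_edges)
  show "inj_on C3P3_pos C3P3_verts" by (simp add: C3P3_verts_eq)
  show "\<forall>e\<in>C3P3_edges. card e = 2" using C3P3_edges_doubletons by blast
  fix a b assume "{a, b} \<in> C3P3_edges"
  then show "a \<in> C3P3_verts \<and> b \<in> C3P3_verts \<and> (\<forall>w \<in> C3P3_verts. w \<noteq> a \<longrightarrow> w \<noteq> b \<longrightarrow>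
      C3P3_pos w \<notin> closed_segment (C3P3_pos a) (C3P3_pos b))"
    unfolding C3P3_edges_eq insert_iff empty_iff doubleton_eq_iff
    by (elim disjE conjE FalseE; hypsubst;
        simp add: C3P3_verts_eq in_segment complex_eq_iff algebra_simps; linarith?)
qed

lemma C3P3_straight_crossings:
  assumes "e \<in> C3P3_edges" "f \<in> C3P3_edges" "e \<noteq> f"
  shows "edge_interior C3P3_pos (straight_edges C3P3_pos) e \<inter>
         edge_interior C3P3_pos (straight_edges C3P3_pos) f \<subseteq>
    (if {e, f} = {{Inl 2, Inl 0}, {Inr 1, Inr 2}} then {Complex (-3/4) (-9/4)}
     else if {e, f} = {{Inl 0, Inr 0}, {Inl 1, Inr 1}} then {Complex (1/2) (-3/4)} else {})"
  using assms unfolding C3P3_edges_eq insert_iff empty_iff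
  by (elim disjE FalseE; hypsubst; simp add: edge_interior_straight_edges doubleton_eq_iff)
    ((rule open_segment_Int_emptyI | rule open_segment_Int_subsetI),
      simp add: complex_eq_iff algebra_simps, linarith?)+

lemma C3P3_straight_crosses_at:
  assumes "crosses_at C3P3_edges C3P3_pos (straight_edges C3P3_pos) e f p"
  shows "(e = {Inl 2, Inl 0} \<and> f = {Inr 1, Inr 2} \<or> e = {Inr 1, Inr 2} \<and> f = {Inl 2, Inl 0}) \<and>
           p = Complex (-3/4) (-9/4) \<or>
         (e = {Inl 0, Inr 0} \<and> f = {Inl 1, Inr 1} \<or> e = {Inl 1, Inr 1} \<and> f = {Inl 0, Inr 0}) \<and>
           p = Complex (1/2) (-3/4)"
proof -
  have "p \<in> (if {e, f} = {{Inl 2, Inl 0}, {Inr 1, Inr 2}} then {Complex (-3/4) (-9/4)}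
      else if {e, f} = {{Inl 0, Inr 0}, {Inl 1, Inr 1}} then {Complex (1/2) (-3/4)} else {})"
    using C3P3_straight_crossings[of e f] assms unfolding crosses_at_def by blast
  then show ?thesis by (simp only: doubleton_eq_iff[of e f] split: if_splits) simp_all
qed

lemma C3P3_1planar_le_2: "has_1planar_drawing_le C3P3_verts C3P3_edges 2"
proof -
  let ?crosses = "crosses_at C3P3_edges C3P3_pos (straight_edges C3P3_pos)"
  have "one_planar_drawing C3P3_verts C3P3_edges C3P3_pos (straight_edges C3P3_pos)"
    unfolding one_planar_drawing_def
  proof (intro conjI allI impI)
    show "is_drawing C3P3_verts C3P3_edges C3P3_pos (straight_edges C3P3_pos)"
      by (rule C3P3_straight_drawing)
    show "e \<inter> f = {}" if "?crosses e f p" for e f p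
      using C3P3_straight_crosses_at[OF that] by (elim disjE conjE) simp_all
    show "f = g" "p = q" if "?crosses e f p \<and> ?crosses e g q" for e f g p q
      using C3P3_straight_crosses_at[of e f p] C3P3_straight_crosses_at[of e g q] that
      by (elim conjE disjE; simp add: doubleton_eq_iff)+
  qed
  moreover have "card ((e1 \<union> f1) \<inter> (e2 \<union> f2)) \<le> 2"
    if "?crosses e1 f1 p" "?crosses e2 f2 q" "p \<noteq> q" for e1 f1 p e2 f2 q
    using C3P3_straight_crosses_at[OF that(1)] C3P3_straight_crosses_at[OF that(2)] that(3)
    by (elim conjE disjE; simp add: insert_commute)
  ultimately show ?thesis unfolding has_1planar_drawing_le_def by blast
qed

theorem lemma9:
  shows "class_C2 (join_verts (cycle_verts 3) (path_verts 3))
                  (join_edges (cycle_verts 3) (cycle_edges 3) (path_verts 3) (path_edges 3))"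
proof -
  have "\<not> has_1planar_drawing_le C3P3_verts C3P3_edges 0"
    using C3P3_not_1planar_le_1 has_1planar_drawing_le_mono[of _ _ 0 1] by blast
  then show ?thesis
    unfolding class_C2_def class_C1_def class_C0_def
    using C3P3_not_1planar_le_1 C3P3_1planar_le_2 by blast
qed

end
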